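(* Assume the setting below with $Y_i(0)=0$ for all $i$, and let $p^{\mathrm H}_{k,c}=G_{\mathrm H}(n(c);N,N-k,N_1)$ for $0\le k\le N$ and $c\in\mathbb{R}$. (a) $p^{\mathrm H}_{k,c}$ is monotone non-decreasing in $c$ and monotone non-increasing in $k$. (b) Fix $1\le k\le N$ and $\alpha\in(0,1)$. The set $\{c\in\mathbb{R}: p^{\mathrm H}_{k,c}>\alpha\}$ equals $[\,y_{(k(\alpha))},\infty)$, where $$k(\alpha)\equiv N_1-Q_{\mathrm H}(1-\alpha;N,N-k,N_1).$$ Moreover, $\Pr\big(\tau_{(k)}\ge y_{(k(\alpha))}\big)\ge 1-\alpha$. (c) Fix $c\in\mathbb{R}$ and $\alpha\in(0,1)$. The set $\{N-k: p^{\mathrm H}_{k,c}>\alpha,\ 0\le k\le N\}$ equals $\{n_{c,\alpha},n_{c,\alpha}+1,\dots,N\}$, where $$n_{c,\alpha}=N-\max\{k: G_{\mathrm H}(n(c);N,N-k,N_1)>\alpha,\ 0\le k\le N\}.$$ Moreover, this set contains $N(c)$ with probability at least $1-\alpha$.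
   Context: Setting: - There are $N$ units with fixed potential outcomes $Y_i(1),Y_i(0)$ and ITE $\tau_i=Y_i(1)-Y_i(0)$. - The sorted ITEs are $\tau_{(1)}\le\dots\le\tau_{(N)}$. - CRE: the assignment vector $Z\in\{0,1\}^N$ is uniformly distributed over vectors with exactly $N_1$ ones, where $1\le N_1<N$. - The observed outcome is $Y_i=Z_iY_i(1)+(1-Z_i)Y_i(0)$. - $N(c)=\sum_i\mathbb{1}(\tau_i>c)$ and $n(c)=\sum_iZ_i\mathbb{1}(Y_i>c)$. - $G_{\mathrm H}(x;N,n,N_1)=\Pr(X\ge x)$ for $X$ Hypergeometric with parameters $(N,n,N_1)$ (population size $N$, $n$ marked items, sample size $N_1$). - $Q_{\mathrm H}(\theta;N,n,N_1)=\inf\{x:\Pr(X\le x)\ge\theta\}$ is the $\theta$-quantile of that distribution. - $y_{(1)}\le\dots\le y_{(N_1)}$ are the sorted observed outcomes of the treated units ($Z_i=1$), with the convention $y_{(0)}=-\infty$. *)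

theory Defs
  imports "HOL-Probability.Probability"
begin

text \<open>Units are indexed by 0..<N. An assignment Z is represented by the set S of treated units
  (Z_i = 1 iff i in S). The CRE is the uniform distribution over subsets of size N1.\<close>

definition assignments :: "nat \<Rightarrow> nat \<Rightarrow> nat set set" where
  "assignments N N1 = {S. S \<subseteq> {..<N} \<and> card S = N1}"

definition CRE :: "nat \<Rightarrow> nat \<Rightarrow> nat set pmf" where
  "CRE N N1 = pmf_of_set (assignments N N1)"

definition hyp_pmf :: "nat \<Rightarrow> nat \<Rightarrow> nat \<Rightarrow> nat \<Rightarrow> real" where
  "hyp_pmf NN n m x =
     (if x \<le> m then real (n choose x) * real ((NN - n) choose (m - x)) / real (NN choose m) else 0)"

definition G_H :: "nat \<Rightarrow> nat \<Rightarrow> nat \<Rightarrow> nat \<Rightarrow> real" where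
  "G_H x NN n m = (\<Sum>j\<in>{x..m}. hyp_pmf NN n m j)"

definition F_H :: "int \<Rightarrow> nat \<Rightarrow> nat \<Rightarrow> nat \<Rightarrow> real" where
  "F_H x NN n m = (\<Sum>j\<in>{j. j \<le> m \<and> int j \<le> x}. hyp_pmf NN n m j)"

definition Q_H :: "real \<Rightarrow> nat \<Rightarrow> nat \<Rightarrow> nat \<Rightarrow> int" where
  "Q_H \<theta> NN n m = Inf {x::int. F_H x NN n m \<ge> \<theta>}"

definition Yobs :: "(nat \<Rightarrow> real) \<Rightarrow> (nat \<Rightarrow> real) \<Rightarrow> nat set \<Rightarrow> nat \<Rightarrow> real" where
  "Yobs Y1 Y0 S i = (if i \<in> S then Y1 i else Y0 i)"

definition Ncount :: "nat \<Rightarrow> (nat \<Rightarrow> real) \<Rightarrow> (nat \<Rightarrow> real) \<Rightarrow> real \<Rightarrow> nat" where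
  "Ncount N Y1 Y0 c = card {i\<in>{..<N}. Y1 i - Y0 i > c}"

definition ncount :: "(nat \<Rightarrow> real) \<Rightarrow> (nat \<Rightarrow> real) \<Rightarrow> nat set \<Rightarrow> real \<Rightarrow> nat" where
  "ncount Y1 Y0 S c = card {i\<in>S. Yobs Y1 Y0 S i > c}"

definition tau_ord :: "nat \<Rightarrow> (nat \<Rightarrow> real) \<Rightarrow> (nat \<Rightarrow> real) \<Rightarrow> nat \<Rightarrow> real" where
  "tau_ord N Y1 Y0 k = sort (map (\<lambda>i. Y1 i - Y0 i) [0..<N]) ! (k - 1)"

definition y_ord :: "(nat \<Rightarrow> real) \<Rightarrow> (nat \<Rightarrow> real) \<Rightarrow> nat set \<Rightarrow> nat \<Rightarrow> ereal" where
  "y_ord Y1 Y0 S j = (if j = 0 then -\<infinity>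
      else ereal (sort (map (Yobs Y1 Y0 S) (sorted_list_of_set S)) ! (j - 1)))"

definition pH :: "nat \<Rightarrow> nat \<Rightarrow> (nat \<Rightarrow> real) \<Rightarrow> (nat \<Rightarrow> real) \<Rightarrow> nat set \<Rightarrow> nat \<Rightarrow> real \<Rightarrow> real" where
  "pH N N1 Y1 Y0 S k c = G_H (ncount Y1 Y0 S c) N (N - k) N1"

definition k_alpha :: "nat \<Rightarrow> nat \<Rightarrow> nat \<Rightarrow> real \<Rightarrow> int" where
  "k_alpha N N1 k \<alpha> = int N1 - Q_H (1 - \<alpha>) N (N - k) N1"

definition n_calpha :: "nat \<Rightarrow> nat \<Rightarrow> (nat \<Rightarrow> real) \<Rightarrow> (nat \<Rightarrow> real) \<Rightarrow> nat set \<Rightarrow> real \<Rightarrow> real \<Rightarrow> nat" where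
  "n_calpha N N1 Y1 Y0 S c \<alpha> =
     N - Max {k. k \<le> N \<and> G_H (ncount Y1 Y0 S c) N (N - k) N1 > \<alpha>}"

end

theory Submission
  imports Defs
begin

text \<open>With \<open>Y(0) = 0\<close> a treated unit has observed outcome above \<open>c\<close> exactly when its effect
  exceeds \<open>c\<close>, so \<open>n(c)\<close> is the number of treated units among the \<open>N(c)\<close> units with effect
  above \<open>c\<close>: it is hypergeometric, and \<open>G\<^sub>H(n(c); N, N(c), N\<^sub>1)\<close> is an exact upper-tail
  p-value, which like any p-value of a discrete statistic exceeds \<open>\<alpha>\<close> with probability at
  least \<open>1 - \<alpha>\<close>. Since \<open>G\<^sub>H\<close> increases with the number of marked items, the p-value stays
  valid when \<open>N(c)\<close> is replaced by an upper bound \<open>N - k\<close>, e.g. at \<open>c = \<tau>\<^sub>(\<^sub>k\<^sub>)\<close>. The same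
  monotonicity makes both confidence sets superlevel sets, and as \<open>G\<^sub>H(x) > \<alpha>\<close> iff
  \<open>x \<le> Q\<^sub>H(1 - \<alpha>)\<close>, the set in \<open>c\<close> is cut out by the number of treated outcomes at most \<open>c\<close>,
  i.e. by an order statistic of the treated outcomes.\<close>

lemma finite_assignments: "finite (assignments N m)"
  by (rule finite_subset[of _ "Pow {..<N}"]) (auto simp: assignments_def)

lemma card_assignments: "card (assignments N m) = N choose m"
  using n_subsets[of "{..<N}" m] by (simp add: assignments_def)

lemma assignments_nonempty: "m \<le> N \<Longrightarrow> assignments N m \<noteq> {}"
  using card_assignments[of N m] by (metis card.empty zero_less_binomial less_irrefl)

lemma set_pmf_CRE: "m \<le> N \<Longrightarrow> set_pmf (CRE N m) = assignments N m"
  unfolding CRE_def using finite_assignments assignments_nonempty by (simp add: set_pmf_of_set)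

lemma assignment_finite: "S \<in> assignments N m \<Longrightarrow> finite S"
  unfolding assignments_def by (auto intro: finite_subset)

lemma card_Int_assignment_le: "S \<in> assignments N m \<Longrightarrow> card (S \<inter> A) \<le> m"
  unfolding assignments_def by (metis (mono_tags) Int_lower1 card_mono finite_lessThan finite_subset mem_Collect_eq)

lemma card_assignments_Int_eq:
  assumes A: "A \<subseteq> {..<N}" and j: "j \<le> m"
  shows "card {S \<in> assignments N m. card (S \<inter> A) = j} = (card A choose j) * ((N - card A) choose (m - j))"
proof -
  let ?L = "{S \<in> assignments N m. card (S \<inter> A) = j}"
  let ?R = "{T. T \<subseteq> A \<and> card T = j} \<times> {U. U \<subseteq> {..<N} - A \<and> card U = m - j}"
  have fin: "finite A" using A finite_subset by blast
  have "bij_betw (\<lambda>S. (S \<inter> A, S - A)) ?L ?R"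
  proof (rule bij_betw_byWitness[where f'="\<lambda>(T, U). T \<union> U"])
    show "(\<lambda>S. (S \<inter> A, S - A)) ` ?L \<subseteq> ?R"
    proof
      fix x assume "x \<in> (\<lambda>S. (S \<inter> A, S - A)) ` ?L"
      then obtain S where S: "S \<in> assignments N m" "card (S \<inter> A) = j" and x: "x = (S \<inter> A, S - A)"
        by auto
      then have "finite S" "S \<subseteq> {..<N}" "card S = m" by (auto simp: assignments_def intro: finite_subset)
      then show "x \<in> ?R" using S x by (auto simp: card_Diff_subset_Int)
    qed
    show "(\<lambda>(T, U). T \<union> U) ` ?R \<subseteq> ?L"
    proof
      fix x assume "x \<in> (\<lambda>(T, U). T \<union> U) ` ?R"
      then obtain T U where T: "T \<subseteq> A" "card T = j" and U: "U \<subseteq> {..<N} - A" "card U = m - j"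
        and x: "x = T \<union> U" by auto
      have "finite T" "finite U" using T U fin finite_subset by (blast, blast)
      then have "card x = m" using T U j x by (subst x, subst card_Un_disjoint) auto
      moreover have "x \<inter> A = T" using T U x by auto
      ultimately show "x \<in> ?L" using T U x A by (auto simp: assignments_def)
    qed
  qed fastforce+
  then have "card ?L = card ?R" by (rule bij_betw_same_card)
  also have "\<dots> = (card A choose j) * ((N - card A) choose (m - j))"
    using n_subsets[OF fin, of j] n_subsets[of "{..<N} - A" "m - j"] A fin
    by (simp add: card_cartesian_product card_Diff_subset)
  finally show ?thesis .
qed

lemma G_H_eq_prob_CRE:
  assumes A: "A \<subseteq> {..<N}" and m: "m \<le> N"
  shows "G_H x N (card A) m = measure_pmf.prob (CRE N m) {S. x \<le> card (S \<inter> A)}"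
proof -
  let ?B = "assignments N m" and ?n = "card A"
  have split: "?B \<inter> {S. x \<le> card (S \<inter> A)} = (\<Union>j\<in>{x..m}. {S \<in> ?B. card (S \<inter> A) = j})"
    using card_Int_assignment_le[of _ N m A] by auto
  have "card (?B \<inter> {S. x \<le> card (S \<inter> A)}) = (\<Sum>j\<in>{x..m}. card {S \<in> ?B. card (S \<inter> A) = j})"
    unfolding split by (rule card_UN_disjoint) (auto intro: finite_subset[OF _ finite_assignments])
  also have "\<dots> = (\<Sum>j\<in>{x..m}. (?n choose j) * ((N - ?n) choose (m - j)))"
    by (rule sum.cong) (auto intro!: card_assignments_Int_eq[OF A])
  finally have "measure_pmf.prob (CRE N m) {S. x \<le> card (S \<inter> A)}
      = (\<Sum>j\<in>{x..m}. real (?n choose j) * real ((N - ?n) choose (m - j))) / real (N choose m)"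
    unfolding CRE_def using finite_assignments assignments_nonempty[OF m]
    by (simp add: measure_pmf_of_set card_assignments)
  also have "\<dots> = G_H x N ?n m"
    unfolding G_H_def hyp_pmf_def sum_divide_distrib by (rule sum.cong) auto
  finally show ?thesis by simp
qed

lemma G_H_mono:
  assumes "n \<le> n'" "n' \<le> N" "m \<le> N"
  shows "G_H x N n m \<le> G_H x N n' m"
proof -
  have "G_H x N n m = measure_pmf.prob (CRE N m) {S. x \<le> card (S \<inter> {..<n})}"
    using G_H_eq_prob_CRE[of "{..<n}" N m x] assms by simp
  also have "\<dots> \<le> measure_pmf.prob (CRE N m) {S. x \<le> card (S \<inter> {..<n'})}"
  proof (intro measure_pmf.finite_measure_mono subsetI)
    fix S assume "S \<in> {S. x \<le> card (S \<inter> {..<n})}"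
    moreover have "card (S \<inter> {..<n}) \<le> card (S \<inter> {..<n'})"
      using assms by (intro card_mono) auto
    ultimately show "S \<in> {S. x \<le> card (S \<inter> {..<n'})}" by simp
  qed simp
  also have "\<dots> = G_H x N n' m"
    using G_H_eq_prob_CRE[of "{..<n'}" N m x] assms by simp
  finally show ?thesis .
qed

lemma G_H_antimono: "x \<le> x' \<Longrightarrow> G_H x' N n m \<le> G_H x N n m"
  unfolding G_H_def by (rule sum_mono2) (auto simp: hyp_pmf_def)

lemma G_H_zero: "n \<le> N \<Longrightarrow> m \<le> N \<Longrightarrow> G_H 0 N n m = 1"
  using G_H_eq_prob_CRE[of "{..<n}" N m 0] by simp

lemma G_H_plus_F_H:
  assumes "n \<le> N" "m \<le> N"
  shows "G_H x N n m + F_H (int x - 1) N n m = 1"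
proof -
  have "G_H x N n m + F_H (int x - 1) N n m = (\<Sum>j\<in>{x..m} \<union> {j. j \<le> m \<and> int j \<le> int x - 1}. hyp_pmf N n m j)"
    unfolding G_H_def F_H_def by (rule sum.union_disjoint[symmetric]) auto
  also have "{x..m} \<union> {j. j \<le> m \<and> int j \<le> int x - 1} = {0..m}" by auto
  also have "(\<Sum>j\<in>{0..m}. hyp_pmf N n m j) = 1"
    using G_H_zero[OF assms] by (simp add: G_H_def)
  finally show ?thesis .
qed

lemma G_H_all_marked:
  assumes "x \<le> m" "m \<le> N"
  shows "G_H x N N m = 1"
proof -
  have "F_H (int x - 1) N N m = 0"
    unfolding F_H_def using assms by (intro sum.neutral) (auto simp: hyp_pmf_def)
  then show ?thesis using G_H_plus_F_H[of N N m x] assms by simp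
qed

lemma F_H_mono: "y \<le> y' \<Longrightarrow> F_H y NN n m \<le> F_H y' NN n m"
  unfolding F_H_def by (rule sum_mono2) (auto simp: hyp_pmf_def)

lemma G_H_gt_iff_le_Q_H:
  assumes "n \<le> N" "m \<le> N" "0 \<le> \<alpha>" "\<alpha> < 1"
  shows "\<alpha> < G_H x N n m \<longleftrightarrow> int x \<le> Q_H (1 - \<alpha>) N n m"
proof -
  define T where "T = {y::int. 1 - \<alpha> \<le> F_H y N n m}"
  have "F_H (int m) N n m = 1"
    using G_H_plus_F_H[OF assms(1,2), of "Suc m"] by (simp add: G_H_def)
  then have m: "int m \<in> T" unfolding T_def using assms by simp
  have "F_H y N n m = 0" if "y < 0" for y
    unfolding F_H_def using that by (intro sum.neutral) auto
  then have "bdd_below T"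
    unfolding T_def using assms by (intro bdd_belowI[of _ 0]) (force simp: not_le[symmetric])
  note le_Inf_iff = le_cInf_iff[OF _ this]
  have up_closed: "y \<in> T \<Longrightarrow> y \<le> y' \<Longrightarrow> y' \<in> T" for y y'
    unfolding T_def using F_H_mono[of y y' N n m] by auto
  have "\<alpha> < G_H x N n m \<longleftrightarrow> int x - 1 \<notin> T"
    using G_H_plus_F_H[OF assms(1,2), of x] unfolding T_def by auto
  also have "\<dots> \<longleftrightarrow> (\<forall>y\<in>T. int x \<le> y)"
    using up_closed by (metis linorder_not_le zle_diff1_eq order_refl)
  also have "\<dots> \<longleftrightarrow> int x \<le> Q_H (1 - \<alpha>) N n m"
    unfolding Q_H_def T_def[symmetric] using m le_Inf_iff by blast
  finally show ?thesis .
qed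

lemma Q_H_bounds:
  assumes "n \<le> N" "m \<le> N" "0 \<le> \<alpha>" "\<alpha> < 1"
  shows "0 \<le> Q_H (1 - \<alpha>) N n m" "Q_H (1 - \<alpha>) N n m \<le> int m"
  using G_H_gt_iff_le_Q_H[OF assms, of 0] G_H_gt_iff_le_Q_H[OF assms, of "Suc m"]
    G_H_zero[OF assms(1,2)] assms by (simp_all add: G_H_def)

text \<open>The event \<open>G(f) \<le> \<alpha>\<close> is the upper set \<open>x\<^sub>0 \<le> f\<close> for the least \<open>x\<^sub>0\<close> with
  \<open>G(x\<^sub>0) \<le> \<alpha>\<close>, so its probability is \<open>G(x\<^sub>0)\<close> itself.\<close>

lemma prob_tail_pvalue_gt_ge:
  fixes M :: "'a pmf" and f :: "'a \<Rightarrow> nat"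
  assumes "0 \<le> \<alpha>"
  shows "1 - \<alpha> \<le> measure_pmf.prob M {w. \<alpha> < measure_pmf.prob M {w'. f w \<le> f w'}}"
proof -
  define G where "G x = measure_pmf.prob M {w. x \<le> f w}" for x
  have "measure_pmf.prob M {w. G (f w) \<le> \<alpha>} \<le> \<alpha>"
  proof (cases "\<exists>x. G x \<le> \<alpha>")
    case False
    then show ?thesis using assms by simp
  next
    case True
    define x0 where "x0 = (LEAST x. G x \<le> \<alpha>)"
    have x0: "G x0 \<le> \<alpha>" unfolding x0_def using True by (metis LeastI)
    have "G (f w) \<le> G x0" if "x0 \<le> f w" for w
      unfolding G_def using that by (intro measure_pmf.finite_measure_mono) auto
    then have "{w. G (f w) \<le> \<alpha>} = {w. x0 \<le> f w}"
      using x0 unfolding x0_def by (auto intro: Least_le order_trans)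
    then show ?thesis using x0 unfolding G_def by simp
  qed
  moreover have "{w. \<alpha> < G (f w)} = space (measure_pmf M) - {w. G (f w) \<le> \<alpha>}"
    by auto
  ultimately show ?thesis
    using measure_pmf.prob_compl[of "{w. G (f w) \<le> \<alpha>}" M] unfolding G_def by simp
qed

lemma prob_CRE_ge_if_G_H_gt:
  assumes A: "A \<subseteq> {..<N}" and m: "m \<le> N" and \<alpha>: "0 \<le> \<alpha>"
    and P: "\<And>S. S \<in> assignments N m \<Longrightarrow> \<alpha> < G_H (card (S \<inter> A)) N (card A) m \<Longrightarrow> P S"
  shows "1 - \<alpha> \<le> measure_pmf.prob (CRE N m) {S. P S}"
proof -
  have "1 - \<alpha> \<le> measure_pmf.prob (CRE N m) {S. \<alpha> < G_H (card (S \<inter> A)) N (card A) m}"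
    using prob_tail_pvalue_gt_ge[OF \<alpha>, of "CRE N m" "\<lambda>S. card (S \<inter> A)"]
    by (simp add: G_H_eq_prob_CRE[OF A m])
  also have "\<dots> \<le> measure_pmf.prob (CRE N m) {S. P S}"
    using P by (intro measure_pmf.finite_measure_mono_AE) (auto simp: AE_measure_pmf_iff set_pmf_CRE[OF m])
  finally show ?thesis .
qed

lemma sorted_nth_le_iff_count_le:
  fixes ys :: "'a::linorder list"
  assumes s: "sorted ys" and j: "0 < j" "j \<le> length ys"
  shows "ys ! (j - 1) \<le> c \<longleftrightarrow> j \<le> length (filter (\<lambda>y. y \<le> c) ys)"
proof
  assume nth_le: "ys ! (j - 1) \<le> c"
  have "ys ! i \<le> c" if "i < j" for i
  proof -
    have "i \<le> j - 1" "j - 1 < length ys" using that j by auto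
    then show ?thesis using sorted_nth_mono[OF s] nth_le order_trans by blast
  qed
  then have "{..<j} \<subseteq> {i. i < length ys \<and> ys ! i \<le> c}"
    using j by auto
  then have "card {..<j} \<le> card {i. i < length ys \<and> ys ! i \<le> c}" by (intro card_mono) auto
  then show "j \<le> length (filter (\<lambda>y. y \<le> c) ys)" by (simp add: length_filter_conv_card)
next
  assume count: "j \<le> length (filter (\<lambda>y. y \<le> c) ys)"
  show "ys ! (j - 1) \<le> c"
  proof (rule ccontr)
    assume gt: "\<not> ys ! (j - 1) \<le> c"
    have "i < j - 1" if "i < length ys" "ys ! i \<le> c" for i
    proof (rule ccontr)
      assume "\<not> i < j - 1"
      then show False using sorted_nth_mono[OF s, of "j - 1" i] that gt by (simp add: not_less)
    qed
    then have "{i. i < length ys \<and> ys ! i \<le> c} \<subseteq> {..<j - 1}" by auto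
    then have "card {i. i < length ys \<and> ys ! i \<le> c} \<le> j - 1"
      by (metis card_lessThan card_mono finite_lessThan)
    then show False using count j by (simp add: length_filter_conv_card)
  qed
qed

lemma sorted_count_gt_nth_le:
  fixes ys :: "'a::linorder list"
  assumes s: "sorted ys" and k: "k < length ys"
  shows "length (filter (\<lambda>y. ys ! k < y) ys) \<le> length ys - Suc k"
proof -
  have "Suc k \<le> i" if "ys ! k < ys ! i" for i
  proof (rule ccontr)
    assume "\<not> Suc k \<le> i"
    then have "ys ! i \<le> ys ! k" using sorted_nth_mono[OF s, of i k] k by simp
    then show False using that by simp
  qed
  then have "{i. i < length ys \<and> ys ! k < ys ! i} \<subseteq> {Suc k..<length ys}" by auto
  then show ?thesis
    unfolding length_filter_conv_card by (metis card_atLeastLessThan card_mono finite_atLeastLessThan)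
qed

lemma card_gt_tau_ord_le:
  assumes "1 \<le> k" "k \<le> N"
  shows "card {i\<in>{..<N}. tau_ord N Y1 Y0 k < Y1 i - Y0 i} \<le> N - k"
proof -
  define xs where "xs = map (\<lambda>i. Y1 i - Y0 i) [0..<N]"
  have "card {i\<in>{..<N}. tau_ord N Y1 Y0 k < Y1 i - Y0 i} = length (filter (\<lambda>y. tau_ord N Y1 Y0 k < y) xs)"
    unfolding xs_def length_filter_conv_card by (intro arg_cong[where f=card]) auto
  also have "\<dots> = length (filter (\<lambda>y. sort xs ! (k - 1) < y) (sort xs))"
    by (simp add: filter_sort tau_ord_def xs_def)
  also have "\<dots> \<le> N - k"
    using sorted_count_gt_nth_le[of "sort xs" "k - 1"] assms by (simp add: xs_def)
  finally show ?thesis .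
qed

lemma y_ord_le_iff:
  assumes S: "S \<in> assignments N m" and j: "j \<le> m"
  shows "y_ord Y1 Y0 S j \<le> ereal c \<longleftrightarrow> j \<le> card {i\<in>S. Y1 i \<le> c}"
proof (cases "j = 0")
  case True
  then show ?thesis by (simp add: y_ord_def)
next
  case False
  define ys where "ys = sort (map (Yobs Y1 Y0 S) (sorted_list_of_set S))"
  have fin: "finite S" and card: "card S = m"
    using S unfolding assignments_def by (auto intro: finite_subset)
  have "length (filter (\<lambda>y. y \<le> c) ys) = card {i\<in>S. Y1 i \<le> c}"
    unfolding ys_def using fin
    by (simp add: filter_sort filter_map distinct_length_filter Yobs_def Int_def conj_commute cong: conj_cong)
  moreover have "length ys = m" unfolding ys_def using card fin by simp
  ultimately show ?thesis
    using sorted_nth_le_iff_count_le[of ys j c] False j by (simp add: y_ord_def ys_def)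
qed

lemma ncount_antimono:
  assumes "finite S" "c \<le> c'"
  shows "ncount Y1 Y0 S c' \<le> ncount Y1 Y0 S c"
  unfolding ncount_def using assms by (intro card_mono) auto

lemma ncount_plus_card_le_eq:
  assumes "finite S"
  shows "ncount Y1 Y0 S c + card {i\<in>S. Y1 i \<le> c} = card S"
proof -
  have "ncount Y1 Y0 S c + card {i\<in>S. Y1 i \<le> c} = card {i\<in>S. \<not> Y1 i \<le> c} + card {i\<in>S. Y1 i \<le> c}"
    unfolding ncount_def Yobs_def by (simp add: not_le cong: conj_cong)
  also have "card {i\<in>S. \<not> Y1 i \<le> c} + card {i\<in>S. Y1 i \<le> c}
      = card ({i\<in>S. \<not> Y1 i \<le> c} \<union> {i\<in>S. Y1 i \<le> c})"
    using assms by (intro card_Un_disjoint[symmetric]) auto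
  also have "{i\<in>S. \<not> Y1 i \<le> c} \<union> {i\<in>S. Y1 i \<le> c} = S" by auto
  finally show ?thesis .
qed

lemma ncount_eq_card_Int:
  assumes "S \<subseteq> {..<N}" "\<forall>i. Y0 i = 0"
  shows "ncount Y1 Y0 S c = card (S \<inter> {i\<in>{..<N}. c < Y1 i - Y0 i})"
  using assms unfolding ncount_def Yobs_def by (intro arg_cong[where f=card]) auto

lemma pH_mono_in_c:
  "finite S \<Longrightarrow> c \<le> c' \<Longrightarrow> pH N N1 Y1 Y0 S k c \<le> pH N N1 Y1 Y0 S k c'"
  unfolding pH_def by (intro G_H_antimono ncount_antimono)

lemma pH_antimono_in_k:
  "N1 \<le> N \<Longrightarrow> k \<le> k' \<Longrightarrow> pH N N1 Y1 Y0 S k' c \<le> pH N N1 Y1 Y0 S k c"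
  unfolding pH_def by (intro G_H_mono) auto

lemma pH_gt_iff_y_ord_le:
  assumes S: "S \<in> assignments N N1" and N1: "N1 \<le> N" and \<alpha>: "0 \<le> \<alpha>" "\<alpha> < 1"
  shows "\<alpha> < pH N N1 Y1 Y0 S k c \<longleftrightarrow> y_ord Y1 Y0 S (nat (k_alpha N N1 k \<alpha>)) \<le> ereal c"
proof -
  define Q where "Q = Q_H (1 - \<alpha>) N (N - k) N1"
  have "card S = N1" using S by (simp add: assignments_def)
  then have count: "ncount Y1 Y0 S c + card {i\<in>S. Y1 i \<le> c} = N1"
    using ncount_plus_card_le_eq[OF assignment_finite[OF S]] by simp
  have Q: "0 \<le> Q" "Q \<le> int N1"
    unfolding Q_def using Q_H_bounds[of "N - k" N N1 \<alpha>] N1 \<alpha> by simp_all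
  have "\<alpha> < pH N N1 Y1 Y0 S k c \<longleftrightarrow> int (ncount Y1 Y0 S c) \<le> Q"
    unfolding pH_def Q_def using G_H_gt_iff_le_Q_H[of "N - k" N N1 \<alpha>] N1 \<alpha> by simp
  also have "\<dots> \<longleftrightarrow> nat (int N1 - Q) \<le> card {i\<in>S. Y1 i \<le> c}"
    using count Q by auto
  also have "\<dots> \<longleftrightarrow> y_ord Y1 Y0 S (nat (k_alpha N N1 k \<alpha>)) \<le> ereal c"
    unfolding k_alpha_def Q_def[symmetric] using Q by (intro y_ord_le_iff[OF S, symmetric]) auto
  finally show ?thesis .
qed

lemma down_closed_eq_atMost_Max:
  fixes K :: "nat set"
  assumes "finite K" "K \<noteq> {}" "\<And>k k'. k \<in> K \<Longrightarrow> k' \<le> k \<Longrightarrow> k' \<in> K"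
  shows "K = {..Max K}"
proof (intro equalityI subsetI)
  fix k assume "k \<in> K"
  then show "k \<in> {..Max K}" using Max_ge[OF assms(1)] by simp
next
  fix k assume "k \<in> {..Max K}"
  then show "k \<in> K" using assms(3)[OF Max_in[OF assms(1,2)]] by simp
qed

lemma image_diff_atMost_nat: "(m::nat) \<le> n \<Longrightarrow> (\<lambda>k. n - k) ` {..m} = {n - m..n}"
proof (intro equalityI subsetI)
  fix x assume "m \<le> n" "x \<in> {n - m..n}"
  then have "n - x \<in> {..m}" "x = n - (n - x)" by auto
  then show "x \<in> (\<lambda>k. n - k) ` {..m}" by (rule rev_image_eqI)
qed auto

lemma pH_gt_set_eq_atLeastAtMost_n_calpha:
  assumes S: "S \<in> assignments N N1" and N1: "N1 \<le> N" and \<alpha>: "\<alpha> < 1"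
  shows "{N - k | k. k \<le> N \<and> \<alpha> < pH N N1 Y1 Y0 S k c} = {n_calpha N N1 Y1 Y0 S c \<alpha>..N}"
proof -
  define K where "K = {k. k \<le> N \<and> \<alpha> < G_H (ncount Y1 Y0 S c) N (N - k) N1}"
  have "card S = N1" using S by (simp add: assignments_def)
  then have "ncount Y1 Y0 S c \<le> N1"
    using ncount_plus_card_le_eq[OF assignment_finite[OF S], of Y1 Y0 c] by simp
  then have "0 \<in> K" unfolding K_def using G_H_all_marked N1 \<alpha> by simp
  moreover have "k' \<in> K" if "k \<in> K" "k' \<le> k" for k k'
  proof -
    have "G_H (ncount Y1 Y0 S c) N (N - k) N1 \<le> G_H (ncount Y1 Y0 S c) N (N - k') N1"
      using that(2) N1 by (intro G_H_mono) auto
    then show ?thesis using that unfolding K_def by simp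
  qed
  ultimately have "K = {..Max K}" by (intro down_closed_eq_atMost_Max) (auto simp: K_def)
  moreover have "Max K \<le> N" using \<open>K = {..Max K}\<close> unfolding K_def by auto
  ultimately have "(\<lambda>k. N - k) ` K = {N - Max K..N}" by (metis image_diff_atMost_nat)
  moreover have "{N - k | k. k \<le> N \<and> \<alpha> < pH N N1 Y1 Y0 S k c} = (\<lambda>k. N - k) ` K"
    unfolding K_def pH_def by auto
  ultimately show ?thesis unfolding n_calpha_def K_def by simp
qed

lemma prob_y_ord_le_tau_ord:
  assumes Y0: "\<forall>i. Y0 i = 0" and N1: "N1 \<le> N" and k: "1 \<le> k" "k \<le> N" and \<alpha>: "0 \<le> \<alpha>" "\<alpha> < 1"
  shows "1 - \<alpha> \<le> measure_pmf.prob (CRE N N1)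
           {S. y_ord Y1 Y0 S (nat (k_alpha N N1 k \<alpha>)) \<le> ereal (tau_ord N Y1 Y0 k)}"
proof (rule prob_CRE_ge_if_G_H_gt)
  let ?A = "{i\<in>{..<N}. tau_ord N Y1 Y0 k < Y1 i - Y0 i}"
  fix S assume S: "S \<in> assignments N N1" and gt: "\<alpha> < G_H (card (S \<inter> ?A)) N (card ?A) N1"
  have "card ?A \<le> N - k" using card_gt_tau_ord_le k .
  moreover have "ncount Y1 Y0 S (tau_ord N Y1 Y0 k) = card (S \<inter> ?A)"
    using S ncount_eq_card_Int[OF _ Y0] by (simp add: assignments_def)
  ultimately have "G_H (card (S \<inter> ?A)) N (card ?A) N1 \<le> pH N N1 Y1 Y0 S k (tau_ord N Y1 Y0 k)"
    unfolding pH_def using N1 by (simp add: G_H_mono)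
  then have "\<alpha> < pH N N1 Y1 Y0 S k (tau_ord N Y1 Y0 k)" using gt by simp
  then show "y_ord Y1 Y0 S (nat (k_alpha N N1 k \<alpha>)) \<le> ereal (tau_ord N Y1 Y0 k)"
    using pH_gt_iff_y_ord_le[OF S N1 \<alpha>] by blast
qed (use N1 \<alpha> in auto)

lemma prob_Ncount_in_n_calpha_set:
  assumes Y0: "\<forall>i. Y0 i = 0" and N1: "N1 \<le> N" and \<alpha>: "0 \<le> \<alpha>" "\<alpha> < 1"
  shows "1 - \<alpha> \<le> measure_pmf.prob (CRE N N1)
           {S. Ncount N Y1 Y0 c \<in> {n_calpha N N1 Y1 Y0 S c \<alpha>..N}}"
proof (rule prob_CRE_ge_if_G_H_gt)
  let ?A = "{i\<in>{..<N}. c < Y1 i - Y0 i}"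
  fix S assume S: "S \<in> assignments N N1" and gt: "\<alpha> < G_H (card (S \<inter> ?A)) N (card ?A) N1"
  have "card ?A \<le> card {..<N}" by (rule card_mono) auto
  then have "card ?A \<le> N" by simp
  moreover have "S \<subseteq> {..<N}" using S by (simp add: assignments_def)
  ultimately have "\<alpha> < pH N N1 Y1 Y0 S (N - card ?A) c"
    using gt ncount_eq_card_Int[OF _ Y0] unfolding pH_def by simp
  then have "N - (N - card ?A) \<in> {N - k | k. k \<le> N \<and> \<alpha> < pH N N1 Y1 Y0 S k c}" by auto
  then show "Ncount N Y1 Y0 c \<in> {n_calpha N N1 Y1 Y0 S c \<alpha>..N}"
    using pH_gt_set_eq_atLeastAtMost_n_calpha[OF S N1 \<alpha>(2)] \<open>card ?A \<le> N\<close>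
    unfolding Ncount_def by simp
qed (use N1 \<alpha> in auto)

theorem proposition2:
  fixes N N1 :: nat and Y1 Y0 :: "nat \<Rightarrow> real"
  assumes N1_pos: "1 \<le> N1" and N1_less: "N1 < N"
    and Y0_zero: "\<forall>i. Y0 i = 0"
  shows
    \<comment> \<open>(a)\<close>
    "(\<forall>S\<in>assignments N N1. \<forall>k c c'. k \<le> N \<and> c \<le> c' \<longrightarrow>
         pH N N1 Y1 Y0 S k c \<le> pH N N1 Y1 Y0 S k c')
     \<and> (\<forall>S\<in>assignments N N1. \<forall>k k' c. k \<le> k' \<and> k' \<le> N \<longrightarrow>
         pH N N1 Y1 Y0 S k' c \<le> pH N N1 Y1 Y0 S k c)
     \<comment> \<open>(b)\<close>
     \<and> (\<forall>k \<alpha>. 1 \<le> k \<and> k \<le> N \<and> 0 < \<alpha> \<and> \<alpha> < 1 \<longrightarrow>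
         (\<forall>S\<in>assignments N N1.
            {c::real. pH N N1 Y1 Y0 S k c > \<alpha>}
              = {c. y_ord Y1 Y0 S (nat (k_alpha N N1 k \<alpha>)) \<le> ereal c})
         \<and> measure_pmf.prob (CRE N N1)
             {S. y_ord Y1 Y0 S (nat (k_alpha N N1 k \<alpha>)) \<le> ereal (tau_ord N Y1 Y0 k)} \<ge> 1 - \<alpha>)
     \<comment> \<open>(c)\<close>
     \<and> (\<forall>c \<alpha>. 0 < \<alpha> \<and> \<alpha> < 1 \<longrightarrow>
         (\<forall>S\<in>assignments N N1.
            {N - k | k. k \<le> N \<and> pH N N1 Y1 Y0 S k c > \<alpha>} = {n_calpha N N1 Y1 Y0 S c \<alpha>..N})
         \<and> measure_pmf.prob (CRE N N1)
             {S. Ncount N Y1 Y0 c \<in> {n_calpha N N1 Y1 Y0 S c \<alpha>..N}} \<ge> 1 - \<alpha>)"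
proof -
  have N1: "N1 \<le> N" using N1_less by simp
  have b_set: "{c. \<alpha> < pH N N1 Y1 Y0 S k c} = {c. y_ord Y1 Y0 S (nat (k_alpha N N1 k \<alpha>)) \<le> ereal c}"
    if "S \<in> assignments N N1" "0 \<le> \<alpha>" "\<alpha> < 1" for S k \<alpha>
    using pH_gt_iff_y_ord_le[OF that(1) N1 that(2,3)] by blast
  show ?thesis
    using pH_mono_in_c[OF assignment_finite] pH_antimono_in_k[OF N1] b_set
      prob_y_ord_le_tau_ord[OF Y0_zero N1] pH_gt_set_eq_atLeastAtMost_n_calpha[OF _ N1]
      prob_Ncount_in_n_calpha_set[OF Y0_zero N1]
    by (meson less_imp_le)
qed

end
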